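(* Let $m,n$ be positive integers and $P\in\Gamma^\pi_{m,n}$. If $m$ is even, then $P$ is an extreme point of $\Gamma^\pi_{m,n}$ if and only if the bipartite graph associated with $P$ is a forest and every row vertex has degree $1$. If $m=2k+1$ is odd, then $P$ is an extreme point of $\Gamma^\pi_{m,n}$ if and only if the bipartite graph associated with $P$ satisfies both: (i) it is a forest; (ii) the middle row vertex $r_{k+1}$ has degree $1$ or $2$, and every other row vertex has degree $1$.
   Context: A real $m\times n$ matrix is stochastic if its entries are nonnegative and each row sums to $1$. $A=(a_{i,j})$ is centrosymmetric if $a_{i,j}=a_{m+1-i,n+1-j}$ for all $i,j$. $\Gamma^\pi_{m,n}$ is the convex set of $m\times n$ centrosymmetric stochastic matrices. The bipartite graph associated with $A\in M_{m,n}$ has vertex classes $\{r_1,\dots,r_m\}$ (row vertices) and $\{s_1,\dots,s_n\}$ (column vertices), with an edge between $r_i$ and $s_j$ if and only if $a_{i,j}\neq 0$. *)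

theory Defs
  imports "HOL-Analysis.Analysis"
begin

text \<open>An m x n real matrix is represented as a function nat => nat => real,
  with rows indexed by 1..m and columns by 1..n; entries outside this range are
  required to be 0, so each matrix has a unique representation.\<close>

definition supported :: "nat \<Rightarrow> nat \<Rightarrow> (nat \<Rightarrow> nat \<Rightarrow> real) \<Rightarrow> bool" where
  "supported m n A \<longleftrightarrow> (\<forall>i j. A i j \<noteq> 0 \<longrightarrow> i \<in> {1..m} \<and> j \<in> {1..n})"

definition stochastic :: "nat \<Rightarrow> nat \<Rightarrow> (nat \<Rightarrow> nat \<Rightarrow> real) \<Rightarrow> bool" where
  "stochastic m n A \<longleftrightarrow> supported m n A
     \<and> (\<forall>i\<in>{1..m}. \<forall>j\<in>{1..n}. 0 \<le> A i j)
     \<and> (\<forall>i\<in>{1..m}. (\<Sum>j=1..n. A i j) = 1)"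

definition centrosymmetric :: "nat \<Rightarrow> nat \<Rightarrow> (nat \<Rightarrow> nat \<Rightarrow> real) \<Rightarrow> bool" where
  "centrosymmetric m n A \<longleftrightarrow>
     (\<forall>i\<in>{1..m}. \<forall>j\<in>{1..n}. A i j = A (m + 1 - i) (n + 1 - j))"

definition Gamma_pi :: "nat \<Rightarrow> nat \<Rightarrow> (nat \<Rightarrow> nat \<Rightarrow> real) set" where
  "Gamma_pi m n = {A. stochastic m n A \<and> centrosymmetric m n A}"

definition extreme_mat :: "(nat \<Rightarrow> nat \<Rightarrow> real) \<Rightarrow> (nat \<Rightarrow> nat \<Rightarrow> real) set \<Rightarrow> bool" where
  "extreme_mat P S \<longleftrightarrow> P \<in> S \<and>
     \<not> (\<exists>A\<in>S. \<exists>B\<in>S. A \<noteq> B \<and>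
          (\<exists>t::real. 0 < t \<and> t < 1 \<and> P = (\<lambda>i j. t * A i j + (1 - t) * B i j)))"

definition bip_adj :: "nat \<Rightarrow> nat \<Rightarrow> (nat \<Rightarrow> nat \<Rightarrow> real) \<Rightarrow> nat + nat \<Rightarrow> nat + nat \<Rightarrow> bool" where
  "bip_adj m n A u v \<longleftrightarrow> (\<exists>i j. i \<in> {1..m} \<and> j \<in> {1..n} \<and> A i j \<noteq> 0 \<and>
      ((u = Inl i \<and> v = Inr j) \<or> (u = Inr j \<and> v = Inl i)))"

definition is_cycle :: "('v \<Rightarrow> 'v \<Rightarrow> bool) \<Rightarrow> 'v list \<Rightarrow> bool" where
  "is_cycle adj vs \<longleftrightarrow> 3 \<le> length vs \<and> distinct vs
     \<and> (\<forall>k. Suc k < length vs \<longrightarrow> adj (vs ! k) (vs ! Suc k))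
     \<and> adj (last vs) (hd vs)"

definition is_forest :: "('v \<Rightarrow> 'v \<Rightarrow> bool) \<Rightarrow> bool" where
  "is_forest adj \<longleftrightarrow> \<not> (\<exists>vs. is_cycle adj vs)"

definition row_degree :: "nat \<Rightarrow> (nat \<Rightarrow> nat \<Rightarrow> real) \<Rightarrow> nat \<Rightarrow> nat" where
  "row_degree n A i = card {j \<in> {1..n}. A i j \<noteq> 0}"

end

theory Submission
  imports Defs
begin

text \<open>
  A matrix \<open>P \<in> \<Gamma>\<^sup>\<pi>\<close> is extreme iff no row can be perturbed inside its support. If row \<open>i\<close>
  has nonzero entries in two columns \<open>j1 \<noteq> j2\<close> that are not the mirror pair \<open>j, n+1-j\<close> of
  the middle row, then moving a small mass from \<open>(i, j2)\<close> to \<open>(i, j1)\<close>, together with the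
  centrally symmetric move in row \<open>m+1-i\<close>, gives a direction \<open>D \<noteq> 0\<close> with \<open>P \<plusminus> D \<in> \<Gamma>\<^sup>\<pi>\<close>.
  Conversely, if every row has a single nonzero entry, or (middle row only) a mirror pair of
  nonzero entries, then row sums and centrosymmetry fix every matrix of \<open>\<Gamma>\<^sup>\<pi>\<close> whose support
  lies in that of \<open>P\<close>, so \<open>P\<close> is extreme. This rigidity is exactly the degree condition, and
  it already forces a forest: a cycle of the bipartite graph passes through two distinct row
  vertices, each of degree at least 2.
\<close>

lemma Gamma_piD:
  assumes X: "X \<in> Gamma_pi m n"
  shows Gamma_pi_supported: "X i j \<noteq> 0 \<Longrightarrow> i \<in> {1..m} \<and> j \<in> {1..n}"
    and Gamma_pi_nonneg: "0 \<le> X i j"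
    and Gamma_pi_row_sum: "i \<in> {1..m} \<Longrightarrow> (\<Sum>j=1..n. X i j) = 1"
    and Gamma_pi_centrosymmetric: "i \<in> {1..m} \<Longrightarrow> j \<in> {1..n} \<Longrightarrow> X i j = X (m + 1 - i) (n + 1 - j)"
proof -
  show supp: "X i j \<noteq> 0 \<Longrightarrow> i \<in> {1..m} \<and> j \<in> {1..n}" for i j
    using X unfolding Gamma_pi_def stochastic_def supported_def by blast
  show "0 \<le> X i j"
    using X supp[of i j] unfolding Gamma_pi_def stochastic_def by (cases "X i j = 0") auto
  show "i \<in> {1..m} \<Longrightarrow> (\<Sum>j=1..n. X i j) = 1"
    using X unfolding Gamma_pi_def stochastic_def by blast
  show "i \<in> {1..m} \<Longrightarrow> j \<in> {1..n} \<Longrightarrow> X i j = X (m + 1 - i) (n + 1 - j)"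
    using X unfolding Gamma_pi_def centrosymmetric_def by blast
qed

lemma Gamma_pi_row_nonzero:
  assumes "X \<in> Gamma_pi m n" "i \<in> {1..m}"
  obtains j where "j \<in> {1..n}" "X i j \<noteq> 0"
proof -
  have "\<exists>j\<in>{1..n}. X i j \<noteq> 0"
  proof (rule ccontr)
    assume "\<not> ?thesis"
    then have "(\<Sum>j=1..n. X i j) = 0" by simp
    with Gamma_pi_row_sum[OF assms] show False by simp
  qed
  with that show thesis by blast
qed

definition rigid_row :: "nat \<Rightarrow> nat \<Rightarrow> (nat \<Rightarrow> nat \<Rightarrow> real) \<Rightarrow> nat \<Rightarrow> bool" where
  "rigid_row m n P i \<longleftrightarrow> (\<forall>j1\<in>{1..n}. \<forall>j2\<in>{1..n}. P i j1 \<noteq> 0 \<longrightarrow> P i j2 \<noteq> 0 \<longrightarrow> j1 \<noteq> j2 \<longrightarrow>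
     i = m + 1 - i \<and> j2 = n + 1 - j1)"

lemma Gamma_pi_row_single_support:
  assumes X: "X \<in> Gamma_pi m n" and i: "i \<in> {1..m}" and j0: "j0 \<in> {1..n}"
    and zero: "\<And>j. j \<in> {1..n} \<Longrightarrow> j \<noteq> j0 \<Longrightarrow> X i j = 0" and j: "j \<in> {1..n}"
  shows "X i j = (if j = j0 then 1 else 0)"
proof (cases "j = j0")
  case True
  have "1 = (\<Sum>j=1..n. X i j)" using Gamma_pi_row_sum[OF X i] by simp
  also have "\<dots> = (\<Sum>j\<in>{j0}. X i j)" using j0 zero by (intro sum.mono_neutral_right) auto
  finally show ?thesis using True by simp
qed (use zero j in simp)

lemma Gamma_pi_middle_row_pair_support:
  assumes X: "X \<in> Gamma_pi m n" and i: "i \<in> {1..m}" "i = m + 1 - i"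
    and j0: "j0 \<in> {1..n}" "j0 \<noteq> n + 1 - j0"
    and zero: "\<And>j. j \<in> {1..n} \<Longrightarrow> j \<noteq> j0 \<Longrightarrow> j \<noteq> n + 1 - j0 \<Longrightarrow> X i j = 0"
    and j: "j \<in> {1..n}"
  shows "X i j = (if j = j0 \<or> j = n + 1 - j0 then 1/2 else 0)"
proof -
  have flip: "X i (n + 1 - j0) = X i j0"
    using Gamma_pi_centrosymmetric[OF X i(1) j0(1)] i(2)[symmetric] by simp
  have "1 = (\<Sum>j=1..n. X i j)" using Gamma_pi_row_sum[OF X i(1)] by simp
  also have "\<dots> = (\<Sum>j\<in>{j0, n + 1 - j0}. X i j)" using j0 zero by (intro sum.mono_neutral_right) auto
  also have "\<dots> = 2 * X i j0" using j0(2) flip by simp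
  finally have "X i j0 = 1/2" by simp
  then show ?thesis using flip zero j by auto
qed

lemma Gamma_pi_row_eq_if_support_subset:
  assumes P: "P \<in> Gamma_pi m n" and X: "X \<in> Gamma_pi m n" and i: "i \<in> {1..m}"
    and rigid: "rigid_row m n P i" and supp: "\<And>j. P i j = 0 \<Longrightarrow> X i j = 0" and j: "j \<in> {1..n}"
  shows "X i j = P i j"
proof -
  obtain j0 where j0: "j0 \<in> {1..n}" "P i j0 \<noteq> 0" using Gamma_pi_row_nonzero[OF P i] .
  show ?thesis
  proof (cases "\<exists>j2\<in>{1..n}. j2 \<noteq> j0 \<and> P i j2 \<noteq> 0")
    case False
    then have P0: "P i j' = 0" if "j' \<in> {1..n}" "j' \<noteq> j0" for j' using that by blast
    show ?thesis
      using Gamma_pi_row_single_support[OF P i j0(1) P0 j]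
        Gamma_pi_row_single_support[OF X i j0(1) supp[OF P0] j] by simp
  next
    case True
    then obtain j2 where j2: "j2 \<in> {1..n}" "j2 \<noteq> j0" "P i j2 \<noteq> 0" by blast
    have mid: "i = m + 1 - i" and j2_flip: "j2 = n + 1 - j0"
      using rigid j0 j2 unfolding rigid_row_def by blast+
    have pair: "j0 \<noteq> n + 1 - j0" using j2(2) j2_flip by simp
    have P0: "P i j' = 0" if "j' \<in> {1..n}" "j' \<noteq> j0" "j' \<noteq> n + 1 - j0" for j'
      using rigid j0 that unfolding rigid_row_def by blast
    show ?thesis
      using Gamma_pi_middle_row_pair_support[OF P i mid j0(1) pair P0 j]
        Gamma_pi_middle_row_pair_support[OF X i mid j0(1) pair supp[OF P0] j] by simp
  qed
qed

lemma Gamma_pi_eq_if_support_subset: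
  assumes P: "P \<in> Gamma_pi m n" and X: "X \<in> Gamma_pi m n"
    and rigid: "\<And>i. i \<in> {1..m} \<Longrightarrow> rigid_row m n P i"
    and supp: "\<And>i j. P i j = 0 \<Longrightarrow> X i j = 0"
  shows "X = P"
proof (intro ext)
  fix i j
  show "X i j = P i j"
  proof (cases "i \<in> {1..m} \<and> j \<in> {1..n}")
    case True
    then have i: "i \<in> {1..m}" and j: "j \<in> {1..n}" by auto
    show ?thesis by (rule Gamma_pi_row_eq_if_support_subset[OF P X i rigid[OF i] supp j])
  next
    case False
    then have "P i j = 0" "X i j = 0"
      using Gamma_pi_supported[OF P, of i j] Gamma_pi_supported[OF X, of i j] by auto
    then show ?thesis by simp
  qed
qed

lemma extreme_mat_if_rigid_rows:
  assumes P: "P \<in> Gamma_pi m n" and rigid: "\<And>i. i \<in> {1..m} \<Longrightarrow> rigid_row m n P i"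
  shows "extreme_mat P (Gamma_pi m n)"
  unfolding extreme_mat_def
proof (intro conjI P notI)
  assume "\<exists>A\<in>Gamma_pi m n. \<exists>B\<in>Gamma_pi m n. A \<noteq> B \<and>
    (\<exists>t::real. 0 < t \<and> t < 1 \<and> P = (\<lambda>i j. t * A i j + (1 - t) * B i j))"
  then obtain A B t where A: "A \<in> Gamma_pi m n" and B: "B \<in> Gamma_pi m n" and "A \<noteq> B"
    and t: "0 < t" "t < 1" and P_eq: "P = (\<lambda>i j. t * A i j + (1 - t) * B i j)" by blast
  have "A i j = 0 \<and> B i j = 0" if "P i j = 0" for i j
  proof -
    have "t * A i j + (1 - t) * B i j = 0" using that by (simp add: P_eq)
    then show ?thesis using t Gamma_pi_nonneg[OF A, of i j] Gamma_pi_nonneg[OF B, of i j]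
      by (simp add: add_nonneg_eq_0_iff)
  qed
  then have "A = P" and "B = P" using Gamma_pi_eq_if_support_subset[OF P _ rigid] A B by blast+
  with \<open>A \<noteq> B\<close> show False by simp
qed

lemma not_extreme_mat_if_perturbable:
  assumes "(\<lambda>i j. P i j + D i j) \<in> S" "(\<lambda>i j. P i j - D i j) \<in> S" "D i j \<noteq> 0"
  shows "\<not> extreme_mat P S"
proof -
  have "(\<lambda>i j. P i j + D i j) \<noteq> (\<lambda>i j. P i j - D i j)" using assms(3) by (auto simp: fun_eq_iff)
  moreover have "P = (\<lambda>i j. (1/2) * (P i j + D i j) + (1 - 1/2) * (P i j - D i j))"
    by (simp add: algebra_simps)
  moreover have "(0::real) < 1/2" "(1/2::real) < 1" by simp_all
  ultimately show ?thesis using assms(1,2) unfolding extreme_mat_def by blast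
qed

lemma Gamma_pi_add_scaled:
  assumes P: "P \<in> Gamma_pi m n" and D: "supported m n D" "centrosymmetric m n D"
    and rows: "\<And>i. i \<in> {1..m} \<Longrightarrow> (\<Sum>j=1..n. D i j) = 0"
    and bound: "\<And>i j. \<bar>D i j\<bar> \<le> P i j" and s: "\<bar>s\<bar> \<le> 1"
  shows "(\<lambda>i j. P i j + s * D i j) \<in> Gamma_pi m n"
proof -
  have "supported m n (\<lambda>i j. P i j + s * D i j)"
    using Gamma_pi_supported[OF P] D(1) unfolding supported_def
    by (metis add.right_neutral mult_zero_right)
  moreover have "0 \<le> P i j + s * D i j" for i j
  proof -
    have "\<bar>s * D i j\<bar> \<le> \<bar>D i j\<bar>" using s by (simp add: abs_mult mult_left_le_one_le)
    then show ?thesis using bound[of i j] by linarith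
  qed
  moreover have "(\<Sum>j=1..n. P i j + s * D i j) = 1" if "i \<in> {1..m}" for i
    using Gamma_pi_row_sum[OF P that] rows[OF that] by (simp add: sum.distrib sum_distrib_left[symmetric])
  moreover have "centrosymmetric m n (\<lambda>i j. P i j + s * D i j)"
    using Gamma_pi_centrosymmetric[OF P] D(2) unfolding centrosymmetric_def by simp
  ultimately show ?thesis unfolding Gamma_pi_def stochastic_def by blast
qed

lemma centrosymmetric_add_flip:
  "centrosymmetric m n (\<lambda>i j. C i j + C (m + 1 - i) (n + 1 - j))"
  unfolding centrosymmetric_def by auto

lemma supported_add_flip:
  assumes "supported m n C"
  shows "supported m n (\<lambda>i j. C i j + C (m + 1 - i) (n + 1 - j))"
  unfolding supported_def
proof (intro allI impI)
  fix i j assume "C i j + C (m + 1 - i) (n + 1 - j) \<noteq> 0"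
  then have "C i j \<noteq> 0 \<or> C (m + 1 - i) (n + 1 - j) \<noteq> 0" by auto
  then show "i \<in> {1..m} \<and> j \<in> {1..n}" using assms unfolding supported_def by fastforce
qed

lemma row_sum_add_flip:
  fixes C :: "nat \<Rightarrow> nat \<Rightarrow> real"
  assumes rows: "\<And>i. i \<in> {1..m} \<Longrightarrow> (\<Sum>j=1..n. C i j) = 0" and i: "i \<in> {1..m}"
  shows "(\<Sum>j=1..n. C i j + C (m + 1 - i) (n + 1 - j)) = 0"
proof -
  have flip: "m + 1 - i \<in> {1..m}" using i by auto
  have "(\<Sum>j=1..n. C (m + 1 - i) (n + 1 - j)) = (\<Sum>j=1..n. C (m + 1 - i) j)"
    using sum.atLeastAtMost_rev[of "C (m + 1 - i)" 1 n] by simp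
  then show ?thesis using rows[OF i] rows[OF flip] by (simp add: sum.distrib)
qed

lemma abs_add_flip_le:
  assumes P: "P \<in> Gamma_pi m n" and C: "supported m n C"
    and small: "\<And>i j. \<bar>C i j\<bar> \<le> e" and large: "\<And>i j. C i j \<noteq> 0 \<Longrightarrow> 2 * e \<le> P i j"
  shows "\<bar>C i j + C (m + 1 - i) (n + 1 - j)\<bar> \<le> P i j"
proof (cases "C i j = 0 \<and> C (m + 1 - i) (n + 1 - j) = 0")
  case True
  then show ?thesis using Gamma_pi_nonneg[OF P] by simp
next
  case False
  have "2 * e \<le> P i j"
  proof (cases "C i j = 0")
    case True
    with False have nz: "C (m + 1 - i) (n + 1 - j) \<noteq> 0" by simp
    then have "i \<in> {1..m}" "j \<in> {1..n}" using C unfolding supported_def by fastforce+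
    then show ?thesis using large[OF nz] Gamma_pi_centrosymmetric[OF P] by simp
  qed (use large in simp)
  moreover have "\<bar>C i j + C (m + 1 - i) (n + 1 - j)\<bar> \<le> 2 * e"
    using small[of i j] small[of "m + 1 - i" "n + 1 - j"] by linarith
  ultimately show ?thesis by linarith
qed

lemma rigid_row_if_extreme_mat:
  assumes P: "P \<in> Gamma_pi m n" and extreme: "extreme_mat P (Gamma_pi m n)" and i: "i \<in> {1..m}"
  shows "rigid_row m n P i"
  unfolding rigid_row_def
proof (intro ballI impI; rule ccontr)
  fix j1 j2 assume j1: "j1 \<in> {1..n}" and j2: "j2 \<in> {1..n}"
    and nz: "P i j1 \<noteq> 0" "P i j2 \<noteq> 0" "j1 \<noteq> j2" and not_pair: "\<not> (i = m + 1 - i \<and> j2 = n + 1 - j1)"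
  define e where "e = min (P i j1) (P i j2) / 2"
  have e: "0 < e" "2 * e \<le> P i j1" "2 * e \<le> P i j2"
    using nz Gamma_pi_nonneg[OF P, of i] by (auto simp: e_def less_le)
  define C where "C x y = (if x = i then (if y = j1 then e else 0) - (if y = j2 then e else 0) else 0)"
    for x y
  define D where "D x y = C x y + C (m + 1 - x) (n + 1 - y)" for x y
  have C: "supported m n C" using i j1 j2 unfolding supported_def C_def by auto
  have C_small: "\<bar>C x y\<bar> \<le> e" for x y using e(1) nz(3) by (simp add: C_def)
  have C_large: "2 * e \<le> P x y" if "C x y \<noteq> 0" for x y
    using that e by (auto simp: C_def split: if_splits)
  have "(\<Sum>y=1..n. C x y) = 0" for x using j1 j2 by (cases "x = i") (simp_all add: C_def sum_subtractf)
  then have rows: "(\<Sum>y=1..n. D x y) = 0" if "x \<in> {1..m}" for x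
    unfolding D_def using that by (rule row_sum_add_flip)
  have D: "supported m n D" "centrosymmetric m n D"
    unfolding D_def by (rule supported_add_flip[OF C], rule centrosymmetric_add_flip)
  have bound: "\<bar>D x y\<bar> \<le> P x y" for x y
    unfolding D_def by (rule abs_add_flip_le[OF P C C_small C_large])
  have perturb: "(\<lambda>x y. P x y + s * D x y) \<in> Gamma_pi m n" if "\<bar>s\<bar> \<le> 1" for s
    by (rule Gamma_pi_add_scaled[OF P D rows bound that])
  \<comment> \<open>The entry at \<open>(i, j1)\<close> could only be cancelled by the mirror image of \<open>(i, j2)\<close>.\<close>
  have "0 \<le> C (m + 1 - i) (n + 1 - j1)" using e(1) not_pair by (simp add: C_def) metis
  then have "D i j1 \<noteq> 0" using e(1) nz(3) by (simp add: D_def C_def)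
  then have "\<not> extreme_mat P (Gamma_pi m n)"
    using not_extreme_mat_if_perturbable[of P D] perturb[of 1] perturb[of "-1"] by simp
  with extreme show False by blast
qed

lemma extreme_mat_iff_rigid_rows:
  assumes "P \<in> Gamma_pi m n"
  shows "extreme_mat P (Gamma_pi m n) \<longleftrightarrow> (\<forall>i\<in>{1..m}. rigid_row m n P i)"
  using extreme_mat_if_rigid_rows rigid_row_if_extreme_mat assms by blast

lemma card_le_2_iff_flip_pairs:
  fixes S :: "nat set"
  assumes S: "S \<subseteq> {1..n}" and flip: "\<And>a. a \<in> S \<Longrightarrow> n + 1 - a \<in> S"
  shows "card S \<le> 2 \<longleftrightarrow> (\<forall>a\<in>S. \<forall>b\<in>S. a \<noteq> b \<longrightarrow> b = n + 1 - a)"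
proof
  assume card: "card S \<le> 2"
  show "\<forall>a\<in>S. \<forall>b\<in>S. a \<noteq> b \<longrightarrow> b = n + 1 - a"
  proof (intro ballI impI)
    fix a b assume ab: "a \<in> S" "b \<in> S" "a \<noteq> b"
    have "finite S" using S finite_subset by blast
    then have "{a, b} = S" using card ab by (intro card_seteq) auto
    moreover have "n + 1 - a \<in> S" "n + 1 - b \<in> S" using flip ab by auto
    moreover have "a \<in> {1..n}" "b \<in> {1..n}" using S ab by auto
    ultimately show "b = n + 1 - a" using ab(3) by auto
  qed
next
  assume pairs: "\<forall>a\<in>S. \<forall>b\<in>S. a \<noteq> b \<longrightarrow> b = n + 1 - a"
  show "card S \<le> 2"
  proof (cases "S = {}")
    case False
    then obtain a where a: "a \<in> S" by auto
    have "S \<subseteq> {a, n + 1 - a}" using pairs a by auto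
    then have "card S \<le> card {a, n + 1 - a}" by (intro card_mono) auto
    also have "\<dots> \<le> 2" by (cases "a = n + 1 - a") auto
    finally show ?thesis .
  qed simp
qed

lemma rigid_row_iff_row_degree:
  assumes P: "P \<in> Gamma_pi m n" and i: "i \<in> {1..m}"
  shows "rigid_row m n P i \<longleftrightarrow> row_degree n P i \<in> (if i = m + 1 - i then {1, 2} else {1})"
proof -
  define S where "S = {j \<in> {1..n}. P i j \<noteq> 0}"
  have fin: "finite S" and deg: "row_degree n P i = card S" by (simp_all add: S_def row_degree_def)
  obtain j0 where "j0 \<in> S" using Gamma_pi_row_nonzero[OF P i] unfolding S_def by blast
  with fin have pos: "card S \<noteq> 0" by auto
  have rigid: "rigid_row m n P i \<longleftrightarrow> (\<forall>a\<in>S. \<forall>b\<in>S. a \<noteq> b \<longrightarrow> i = m + 1 - i \<and> b = n + 1 - a)"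
    unfolding rigid_row_def S_def by blast
  show ?thesis
  proof (cases "i = m + 1 - i")
    case False
    with rigid have "rigid_row m n P i \<longleftrightarrow> (\<forall>a\<in>S. \<forall>b\<in>S. a = b)" by blast
    also have "\<dots> \<longleftrightarrow> card S \<le> 1" using card_le_Suc0_iff_eq[OF fin] by simp
    also have "\<dots> \<longleftrightarrow> card S = 1" using pos by linarith
    also have "\<dots> \<longleftrightarrow> row_degree n P i \<in> (if i = m + 1 - i then {1, 2} else {1})"
      unfolding if_not_P[OF False] deg by simp
    finally show ?thesis .
  next
    case True
    have flip: "n + 1 - a \<in> S" if a: "a \<in> S" for a
    proof -
      have a_range: "a \<in> {1..n}" and "P i a \<noteq> 0" using a by (auto simp: S_def)
      moreover have "P i (n + 1 - a) = P i a"
        using Gamma_pi_centrosymmetric[OF P i a_range] True[symmetric] by simp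
      ultimately show ?thesis by (auto simp: S_def)
    qed
    have "S \<subseteq> {1..n}" by (auto simp: S_def)
    have "rigid_row m n P i \<longleftrightarrow> (\<forall>a\<in>S. \<forall>b\<in>S. a \<noteq> b \<longrightarrow> b = n + 1 - a)"
      using rigid True[symmetric] by simp
    also have "\<dots> \<longleftrightarrow> card S \<le> 2"
      by (rule card_le_2_iff_flip_pairs[OF \<open>S \<subseteq> {1..n}\<close> flip, symmetric])
    also have "\<dots> \<longleftrightarrow> row_degree n P i \<in> (if i = m + 1 - i then {1, 2} else {1})"
      unfolding if_P[OF True] deg using pos by auto
    finally show ?thesis .
  qed
qed

lemma bip_adj_simps [simp]:
  "bip_adj m n P (Inl i) (Inr j) \<longleftrightarrow> i \<in> {1..m} \<and> j \<in> {1..n} \<and> P i j \<noteq> 0"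
  "bip_adj m n P (Inr j) (Inl i) \<longleftrightarrow> i \<in> {1..m} \<and> j \<in> {1..n} \<and> P i j \<noteq> 0"
  "\<not> bip_adj m n P (Inl i) (Inl i')"
  "\<not> bip_adj m n P (Inr j) (Inr j')"
  unfolding bip_adj_def by auto

lemma row_degree_ge_2:
  assumes "j1 \<in> {1..n}" "j2 \<in> {1..n}" "j1 \<noteq> j2" "P i j1 \<noteq> 0" "P i j2 \<noteq> 0"
  shows "2 \<le> row_degree n P i"
proof -
  have "card {j1, j2} \<le> row_degree n P i"
    unfolding row_degree_def using assms by (intro card_mono) auto
  then show ?thesis using assms(3) by simp
qed

lemma is_cycle_adj_mod:
  assumes "is_cycle adj vs"
  shows "adj (vs ! (a mod length vs)) (vs ! (Suc a mod length vs))"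
proof -
  have len: "3 \<le> length vs" using assms by (simp add: is_cycle_def)
  show ?thesis
  proof (cases "Suc (a mod length vs) = length vs")
    case True
    then have "a mod length vs = length vs - 1" "Suc a mod length vs = 0" by (auto simp: mod_Suc)
    moreover have "vs \<noteq> []" using len by auto
    ultimately show ?thesis using assms by (simp add: is_cycle_def last_conv_nth hd_conv_nth)
  next
    case False
    have "0 < length vs" using len by linarith
    then have "a mod length vs < length vs" by (rule mod_less_divisor)
    with False have "Suc (a mod length vs) < length vs" by linarith
    then show ?thesis using assms False by (simp add: is_cycle_def mod_Suc)
  qed
qed

lemma is_cycle_nth_mod_Suc_Suc_neq:
  assumes "is_cycle adj vs"
  shows "vs ! (a mod length vs) \<noteq> vs ! (Suc (Suc a) mod length vs)"
proof -
  have len: "3 \<le> length vs" and dist: "distinct vs" using assms by (simp_all add: is_cycle_def)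
  have "a mod length vs \<noteq> Suc (Suc a) mod length vs"
    using len by (auto simp: mod_Suc split: if_splits)
  moreover have "0 < length vs" using len by linarith
  then have "a mod length vs < length vs" "Suc (Suc a) mod length vs < length vs"
    by (rule mod_less_divisor)+
  ultimately show ?thesis using dist by (simp add: nth_eq_iff_index_eq)
qed

lemma is_forest_bip_adj_if_row_degree_le_1:
  assumes deg: "\<And>i. i \<in> {1..m} \<Longrightarrow> i \<noteq> c \<Longrightarrow> row_degree n P i \<le> 1"
  shows "is_forest (bip_adj m n P)"
  unfolding is_forest_def
proof
  assume "\<exists>vs. is_cycle (bip_adj m n P) vs"
  then obtain vs where cyc: "is_cycle (bip_adj m n P) vs" ..
  define w where "w a = vs ! (a mod length vs)" for a
  have step: "bip_adj m n P (w a) (w (Suc a))" for a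
    using is_cycle_adj_mod[OF cyc] unfolding w_def .
  have skip: "w a \<noteq> w (Suc (Suc a))" for a
    using is_cycle_nth_mod_Suc_Suc_neq[OF cyc] unfolding w_def .
  have alternating: "\<exists>v. w (Suc a) = (case w a of Inl _ \<Rightarrow> Inr v | Inr _ \<Rightarrow> Inl v)" for a
    using step[of a] by (cases "w a"; cases "w (Suc a)") auto
  have branching: "i \<in> {1..m} \<and> 2 \<le> row_degree n P i" if row: "w (Suc a) = Inl i" for a i
  proof -
    obtain j j' where j: "w a = Inr j" and j': "w (Suc (Suc a)) = Inr j'"
      using step[of a] step[of "Suc a"] row by (cases "w a"; cases "w (Suc (Suc a))") auto
    then have "j \<noteq> j'" using skip[of a] by auto
    then show ?thesis
      using step[of a] step[of "Suc a"] row j j' row_degree_ge_2[of j n j' P i] by auto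
  qed
  obtain a i where i: "w (Suc a) = Inl i"
    using step[of 1] by (cases "w 1"; cases "w (Suc 1)") auto
  obtain i' where i': "w (Suc (Suc (Suc a))) = Inl i'"
    using alternating[of "Suc a"] alternating[of "Suc (Suc a)"] i by auto
  have "i \<noteq> i'" using skip[of "Suc a"] i i' by auto
  moreover have "i = c" and "i' = c" using branching[OF i] branching[OF i'] deg by fastforce+
  ultimately show False by simp
qed

theorem mainTheorem12:
  fixes m n :: nat and P :: "nat \<Rightarrow> nat \<Rightarrow> real"
  assumes "0 < m" and "0 < n" and "P \<in> Gamma_pi m n"
  shows "(even m \<longrightarrow>
            (extreme_mat P (Gamma_pi m n) \<longleftrightarrow>
               is_forest (bip_adj m n P) \<and> (\<forall>i\<in>{1..m}. row_degree n P i = 1)))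
       \<and> (\<forall>k. m = 2 * k + 1 \<longrightarrow>
            (extreme_mat P (Gamma_pi m n) \<longleftrightarrow>
               is_forest (bip_adj m n P)
               \<and> row_degree n P (k + 1) \<in> {1, 2}
               \<and> (\<forall>i\<in>{1..m}. i \<noteq> k + 1 \<longrightarrow> row_degree n P i = 1)))"
proof -
  have "extreme_mat P (Gamma_pi m n) \<longleftrightarrow> (\<forall>i\<in>{1..m}. rigid_row m n P i)"
    using extreme_mat_iff_rigid_rows[OF assms(3)] .
  also have "\<dots> \<longleftrightarrow> (\<forall>i\<in>{1..m}. row_degree n P i \<in> (if i = m + 1 - i then {1, 2} else {1}))"
    using rigid_row_iff_row_degree[OF assms(3)] by (intro ball_cong) auto
  finally have extreme_iff: "extreme_mat P (Gamma_pi m n) \<longleftrightarrow> \<dots>" .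
  show ?thesis
  proof (intro conjI impI allI)
    assume "even m"
    then have "i \<noteq> m + 1 - i" for i by presburger
    moreover have "is_forest (bip_adj m n P)" if "\<forall>i\<in>{1..m}. row_degree n P i = 1"
      using that by (intro is_forest_bip_adj_if_row_degree_le_1[where c = 0]) auto
    ultimately show "extreme_mat P (Gamma_pi m n) \<longleftrightarrow>
        is_forest (bip_adj m n P) \<and> (\<forall>i\<in>{1..m}. row_degree n P i = 1)"
      using extreme_iff by auto
  next
    fix k assume m: "m = 2 * k + 1"
    then have "i = m + 1 - i \<longleftrightarrow> i = k + 1" for i by auto
    moreover have "is_forest (bip_adj m n P)" if "\<forall>i\<in>{1..m}. i \<noteq> k + 1 \<longrightarrow> row_degree n P i = 1"
      using that by (intro is_forest_bip_adj_if_row_degree_le_1[where c = "k + 1"]) auto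
    moreover have "k + 1 \<in> {1..m}" using m by simp
    ultimately show "extreme_mat P (Gamma_pi m n) \<longleftrightarrow> is_forest (bip_adj m n P)
        \<and> row_degree n P (k + 1) \<in> {1, 2} \<and> (\<forall>i\<in>{1..m}. i \<noteq> k + 1 \<longrightarrow> row_degree n P i = 1)"
      using extreme_iff by auto
  qed
qed

end
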